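(* For $r\ge1$ let $\mathring Y^{(n)}_r$ be the number of vertices $v\in V_n$ whose activity is at least $r$. Then for every $0<\varepsilon<1$, $$\sup_{n\ge1}\mathbf P\big(n^{-1}\mathring Y^{(n)}_r>\varepsilon\big)\to0\qquad\text{as } r\to\infty.$$
   Context: Preferred attachment affiliation model. Fix a real $\lambda>0$, an integer $k\ge 1$ and an integer $l\ge 0$ with $\lambda\le k+l$. At time $0$ a library contains books $w_1,\dots,w_l$, each with score $1$. For $n=0,1,2,\dots$, step $n+1$ proceeds as follows: $k$ new books $w_{l+nk+1},\dots,w_{l+(n+1)k}$ arrive, each with score $1$; then a customer $v_{n+1}$ arrives and, conditionally on the past and independently over books, downloads each book $w\in W_{n+1}=\{w_1,\dots,w_{l+(n+1)k}\}$ with probability $p_{n+1,s(w)}=\lambda s(w)/(l+(n+1)k+n\lambda)$, where $s(w)$ is the current score of $w$. Every book downloaded by $v_{n+1}$ then has its score increased by $1$. Let $V_n=\{v_1,\dots,v_n\}$. The activity of a customer $v$ is the number of books it downloaded. *)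

theory Defs
  imports "HOL-Probability.Probability"
begin

fun bern_list :: "real list \<Rightarrow> bool list pmf" where
  "bern_list [] = return_pmf []"
| "bern_list (p # ps) =
     bind_pmf (bernoulli_pmf p) (\<lambda>b. bind_pmf (bern_list ps) (\<lambda>bs. return_pmf (b # bs)))"

text \<open>State after n steps: (scores of books w_1..w_{l+nk} in order, activities of v_1..v_n).
  Step n+1 (argument n): k new books of score 1 arrive, then customer v_{n+1}
  downloads each book of score s independently with probability
  lam * s / (l + (n+1)k + n lam); downloaded books get score +1.\<close>
definition paa_step :: "real \<Rightarrow> nat \<Rightarrow> nat \<Rightarrow> nat \<Rightarrow> nat list \<times> nat list
    \<Rightarrow> (nat list \<times> nat list) pmf" where
  "paa_step lam k l n st =
     (let sc = fst st @ replicate k 1;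
          den = real l + real (Suc n) * real k + real n * lam
      in bind_pmf (bern_list (map (\<lambda>s. lam * real s / den) sc))
           (\<lambda>ds. return_pmf (map2 (\<lambda>s d. if d then Suc s else s) sc ds,
                              snd st @ [length (filter id ds)])))"

fun paa_proc :: "real \<Rightarrow> nat \<Rightarrow> nat \<Rightarrow> nat \<Rightarrow> (nat list \<times> nat list) pmf" where
  "paa_proc lam k l 0 = return_pmf (replicate l 1, [])"
| "paa_proc lam k l (Suc n) = bind_pmf (paa_proc lam k l n) (paa_step lam k l n)"

definition Y_ring :: "nat \<Rightarrow> nat list \<times> nat list \<Rightarrow> nat" where
  "Y_ring r st = length (filter (\<lambda>a. r \<le> a) (snd st))"

end

theory Submission
  imports Defs
begin

text \<open>Every download raises the score of exactly one book, so the total score always equals the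
  number of books plus the total activity of the customers. Hence the expected number of
  downloads of customer \<open>v\<^sub>n\<^sub>+\<^sub>1\<close>, the sum of its download probabilities, is
  \<open>\<lambda>(l + (n+1)k + A\<^sub>n) / (l + (n+1)k + n\<lambda>)\<close> (or less, when probabilities are
  truncated at 1), where \<open>A\<^sub>n\<close> is the total activity so far; inductively
  \<open>E A\<^sub>n \<le> n\<lambda>\<close>. Since at least \<open>r Y\<^sub>r\<close> downloads are made by the customers of
  activity at least \<open>r\<close>, Markov's inequality gives
  \<open>P(Y\<^sub>r > \<epsilon>n) \<le> \<lambda>/(r\<epsilon>)\<close> uniformly in \<open>n\<close>.\<close>

definition total_activity :: "nat list \<times> nat list \<Rightarrow> nat" where
  "total_activity st = sum_list (snd st)"

lemma nn_integral_bernoulli_pmf_indicator_le: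
  assumes "0 \<le> p"
  shows "(\<integral>\<^sup>+b. ennreal (if b then 1 else 0) \<partial>bernoulli_pmf p) \<le> ennreal p"
proof (cases "p \<le> 1")
  case True
  then show ?thesis using assms by simp
next
  case False
  have "(\<integral>\<^sup>+b. ennreal (if b then 1 else 0) \<partial>bernoulli_pmf p) \<le> (\<integral>\<^sup>+b. 1 \<partial>bernoulli_pmf p)"
    by (intro nn_integral_mono) auto
  also have "\<dots> = 1"
    by (simp add: measure_pmf.emeasure_space_1)
  also have "\<dots> \<le> ennreal p"
    using False by simp
  finally show ?thesis .
qed

lemma nn_integral_bern_list_count_le:
  assumes "\<forall>p\<in>set ps. 0 \<le> p"
  shows "(\<integral>\<^sup>+ds. ennreal (length (filter id ds)) \<partial>bern_list ps) \<le> ennreal (sum_list ps)"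
  using assms
proof (induction ps)
  case Nil
  then show ?case by simp
next
  case (Cons p ps)
  let ?count = "\<lambda>ds. ennreal (length (filter id ds))"
  have count_Cons: "?count (b # bs) = ennreal (if b then 1 else 0) + ?count bs" for b bs
    by (simp flip: ennreal_plus)
  have "(\<integral>\<^sup>+ds. ?count ds \<partial>bern_list (p # ps)) =
      (\<integral>\<^sup>+b. (\<integral>\<^sup>+bs. ennreal (if b then 1 else 0) + ?count bs \<partial>bern_list ps) \<partial>bernoulli_pmf p)"
    by (simp only: bern_list.simps nn_integral_bind_pmf nn_integral_return_pmf[OF zero_le] count_Cons)
  also have "\<dots> = (\<integral>\<^sup>+b. ennreal (if b then 1 else 0) \<partial>bernoulli_pmf p) +
      (\<integral>\<^sup>+bs. ?count bs \<partial>bern_list ps)"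
    by (simp add: nn_integral_add measure_pmf.emeasure_space_1)
  also have "\<dots> \<le> ennreal p + ennreal (sum_list ps)"
    using Cons by (intro add_mono nn_integral_bernoulli_pmf_indicator_le) (auto simp: id_def)
  also have "\<dots> = ennreal (sum_list (p # ps))"
    using Cons.prems by (simp add: ennreal_plus sum_list_nonneg)
  finally show ?case .
qed

lemma length_bern_list: "ds \<in> set_pmf (bern_list ps) \<Longrightarrow> length ds = length ps"
  by (induction ps arbitrary: ds) auto

lemma sum_list_map2_Suc_if:
  "length ds = length sc \<Longrightarrow>
   sum_list (map2 (\<lambda>s d. if d then Suc s else s) sc ds) = sum_list sc + length (filter id ds)"
  by (induction sc arbitrary: ds) (auto simp: length_Suc_conv)

lemma sum_list_scores_paa_proc:
  "st \<in> set_pmf (paa_proc lam k l n) \<Longrightarrow> sum_list (fst st) = l + n * k + total_activity st"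
proof (induction n arbitrary: st)
  case 0
  then show ?case by (simp add: total_activity_def sum_list_replicate)
next
  case (Suc n)
  then obtain st0 ds where st0: "st0 \<in> set_pmf (paa_proc lam k l n)"
    and ds: "ds \<in> set_pmf (bern_list (map (\<lambda>s. lam * real s / (real l + real (Suc n) * real k
        + real n * lam)) (fst st0 @ replicate k 1)))"
    and st: "st = (map2 (\<lambda>s d. if d then Suc s else s) (fst st0 @ replicate k 1) ds,
        snd st0 @ [length (filter id ds)])"
    by (auto simp: paa_step_def Let_def)
  have "length ds = length (fst st0 @ replicate k 1)"
    using length_bern_list[OF ds] by simp
  then show ?case
    using Suc.IH[OF st0] st by (simp add: total_activity_def sum_list_map2_Suc_if sum_list_replicate)
qed

lemma nn_integral_total_activity_paa_step_le:
  assumes "0 \<le> lam"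
  shows "(\<integral>\<^sup>+st'. ennreal (total_activity st') \<partial>paa_step lam k l n st) \<le>
    ennreal (real (total_activity st) + lam / (real l + real (Suc n) * real k + real n * lam) *
      real (sum_list (fst st) + k))"
proof -
  define c where "c = lam / (real l + real (Suc n) * real k + real n * lam)"
  define sc where "sc = fst st @ replicate k 1"
  define ps where "ps = map (\<lambda>s. lam * real s / (real l + real (Suc n) * real k + real n * lam)) sc"
  have "\<forall>p\<in>set ps. 0 \<le> p"
    using assms unfolding ps_def by auto
  have ps_eq: "ps = map (\<lambda>s. c * real s) sc"
    unfolding ps_def c_def by simp
  have "(\<integral>\<^sup>+st'. ennreal (total_activity st') \<partial>paa_step lam k l n st) =
      (\<integral>\<^sup>+ds. ennreal (total_activity st) + ennreal (length (filter id ds)) \<partial>bern_list ps)"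
    unfolding paa_step_def Let_def nn_integral_bind_pmf sc_def[symmetric] ps_def[symmetric]
    by (simp add: total_activity_def flip: ennreal_plus)
  also have "\<dots> = ennreal (total_activity st) +
      (\<integral>\<^sup>+ds. ennreal (length (filter id ds)) \<partial>bern_list ps)"
    by (simp add: nn_integral_add measure_pmf.emeasure_space_1)
  also have "\<dots> \<le> ennreal (total_activity st) + ennreal (sum_list ps)"
    by (intro add_mono nn_integral_bern_list_count_le \<open>\<forall>p\<in>set ps. 0 \<le> p\<close> order.refl)
  also have "sum_list ps = c * real (sum_list (fst st) + k)"
    unfolding ps_eq sum_list_const_mult by (simp add: sc_def sum_list_replicate sum_list_of_nat)
  also have "ennreal (total_activity st) + ennreal (c * real (sum_list (fst st) + k)) =
      ennreal (real (total_activity st) + c * real (sum_list (fst st) + k))"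
    using assms by (simp add: c_def ennreal_plus)
  finally show ?thesis
    unfolding c_def .
qed

lemma nn_integral_total_activity_paa_proc_le:
  assumes "0 < lam" and "1 \<le> k"
  shows "(\<integral>\<^sup>+st. ennreal (total_activity st) \<partial>paa_proc lam k l n) \<le> ennreal (real n * lam)"
proof (induction n)
  case 0
  then show ?case by (simp add: total_activity_def)
next
  case (Suc n)
  define den where "den = real l + real (Suc n) * real k + real n * lam"
  have "0 < den"
    using assms unfolding den_def by (intro add_pos_nonneg add_nonneg_pos) auto
  \<comment> \<open>One step maps total activity \<open>x\<close> to at most \<open>x + \<lambda>(l + (n+1)k + x)/den\<close>, an affine
    nondecreasing function of \<open>x\<close> that sends \<open>n\<lambda>\<close> to \<open>(n+1)\<lambda>\<close>.\<close>
  define a where "a = lam / den * (real l + real (Suc n) * real k)"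
  define b where "b = 1 + lam / den"
  have "0 \<le> a" "0 \<le> b"
    using assms \<open>0 < den\<close> unfolding a_def b_def by auto
  have step: "(\<integral>\<^sup>+st'. ennreal (total_activity st') \<partial>paa_step lam k l n st) \<le>
      ennreal a + ennreal b * ennreal (total_activity st)"
    if "st \<in> set_pmf (paa_proc lam k l n)" for st
  proof -
    have "real (sum_list (fst st) + k) = real l + real (Suc n) * real k + total_activity st"
      using sum_list_scores_paa_proc[OF that] by (simp add: algebra_simps)
    then have "real (total_activity st) + lam / den * real (sum_list (fst st) + k) =
        a + b * real (total_activity st)"
      unfolding a_def b_def by (simp add: algebra_simps)
    then show ?thesis
      using nn_integral_total_activity_paa_step_le[of lam k l n st] assms \<open>0 \<le> a\<close> \<open>0 \<le> b\<close>
      by (simp add: den_def ennreal_plus ennreal_mult)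
  qed
  have "(\<integral>\<^sup>+st. ennreal (total_activity st) \<partial>paa_proc lam k l (Suc n)) =
      (\<integral>\<^sup>+st. (\<integral>\<^sup>+st'. ennreal (total_activity st') \<partial>paa_step lam k l n st) \<partial>paa_proc lam k l n)"
    by (simp add: nn_integral_bind_pmf)
  also have "\<dots> \<le> (\<integral>\<^sup>+st. ennreal a + ennreal b * ennreal (total_activity st) \<partial>paa_proc lam k l n)"
    using step by (intro nn_integral_mono_AE AE_pmfI)
  also have "\<dots> = ennreal a + ennreal b * (\<integral>\<^sup>+st. ennreal (total_activity st) \<partial>paa_proc lam k l n)"
    by (simp add: nn_integral_add nn_integral_cmult measure_pmf.emeasure_space_1)
  also have "\<dots> \<le> ennreal a + ennreal b * ennreal (real n * lam)"
    using Suc by (intro add_mono mult_left_mono) auto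
  also have "\<dots> = ennreal (a + b * (real n * lam))"
    using \<open>0 \<le> a\<close> \<open>0 \<le> b\<close> assms by (simp add: ennreal_plus ennreal_mult)
  also have "a + b * (real n * lam) = real n * lam + lam / den * den"
    unfolding a_def b_def den_def by (simp add: algebra_simps flip: add_divide_distrib)
  also have "\<dots> = real (Suc n) * lam"
    using \<open>0 < den\<close> by (simp add: algebra_simps)
  finally show ?case .
qed

lemma Y_ring_mult_le_total_activity: "Y_ring r st * r \<le> total_activity st"
  unfolding Y_ring_def total_activity_def by (induction "snd st" arbitrary: st) auto

lemma prob_Y_ring_gt_le:
  assumes "0 < lam" and "1 \<le> k" and "1 \<le> r" and "1 \<le> n" and "0 < \<epsilon>"
  shows "measure_pmf.prob (paa_proc lam k l n) {st. real (Y_ring r st) / real n > \<epsilon>}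
    \<le> lam / (real r * \<epsilon>)"
proof -
  define c where "c = 1 / (real r * real n * \<epsilon>)"
  have "0 < c"
    using assms unfolding c_def by auto
  have "{st. real (Y_ring r st) / real n > \<epsilon>} \<subseteq> {st. 1 \<le> ennreal c * of_nat (total_activity st)}"
  proof clarify
    fix st
    assume "real (Y_ring r st) / real n > \<epsilon>"
    then have "real r * (\<epsilon> * real n) \<le> real r * real (Y_ring r st)"
      using assms by (intro mult_left_mono) (auto simp: field_simps)
    also have "\<dots> \<le> real (total_activity st)"
      using Y_ring_mult_le_total_activity[of r st] by (simp add: mult.commute flip: of_nat_mult)
    finally have "1 \<le> c * real (total_activity st)"
      using assms unfolding c_def by (simp add: field_simps)
    then show "1 \<le> ennreal c * of_nat (total_activity st)"
      using \<open>0 < c\<close> by (simp add: ennreal_of_nat_eq_real_of_nat flip: ennreal_mult)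
  qed
  then have "emeasure (paa_proc lam k l n) {st. real (Y_ring r st) / real n > \<epsilon>} \<le>
      ennreal c * (\<integral>\<^sup>+st. of_nat (total_activity st) \<partial>paa_proc lam k l n)"
    using nn_integral_Markov_inequality[of "\<lambda>st. of_nat (total_activity st)" UNIV
        "measure_pmf (paa_proc lam k l n)" "ennreal c"]
    by (auto intro: order.trans[OF emeasure_mono])
  also have "\<dots> \<le> ennreal c * ennreal (real n * lam)"
    using nn_integral_total_activity_paa_proc_le[OF assms(1,2)]
    by (intro mult_left_mono) (auto simp: ennreal_of_nat_eq_real_of_nat)
  also have "\<dots> = ennreal (lam / (real r * \<epsilon>))"
    using \<open>0 < c\<close> assms unfolding c_def by (simp add: field_simps flip: ennreal_mult)
  finally show ?thesis
    using assms by (simp add: measure_pmf.emeasure_eq_measure ennreal_le_iff)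
qed

theorem mainTheorem5:
  fixes lam :: real and k l :: nat and \<epsilon> :: real
  assumes "lam > 0" and "k \<ge> 1" and "lam \<le> real (k + l)"
    and "0 < \<epsilon>" and "\<epsilon> < 1"
  shows "(\<lambda>r. SUP n\<in>{1..}. measure_pmf.prob (paa_proc lam k l n)
            {st. real (Y_ring r st) / real n > \<epsilon>}) \<longlonglongrightarrow> 0"
proof (rule tendsto_sandwich[where f = "\<lambda>_. 0" and h = "\<lambda>r. lam / \<epsilon> * inverse (real r)"])
  let ?P = "\<lambda>r n. measure_pmf.prob (paa_proc lam k l n) {st. real (Y_ring r st) / real n > \<epsilon>}"
  have "bdd_above (?P r ` {1..})" for r
    by (intro bdd_aboveI2[where M = 1]) auto
  then show "\<forall>\<^sub>F r in sequentially. 0 \<le> (SUP n\<in>{1..}. ?P r n)"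
    by (intro always_eventually allI cSUP_upper2[of _ _ 1]) auto
  have "(SUP n\<in>{1..}. ?P r n) \<le> lam / \<epsilon> * inverse (real r)" if "1 \<le> r" for r
    using prob_Y_ring_gt_le[OF assms(1,2) that _ assms(4)]
    by (intro cSUP_least) (auto simp: field_simps)
  then show "\<forall>\<^sub>F r in sequentially. (SUP n\<in>{1..}. ?P r n) \<le> lam / \<epsilon> * inverse (real r)"
    by (intro eventually_sequentiallyI)
  show "(\<lambda>r. lam / \<epsilon> * inverse (real r)) \<longlonglongrightarrow> 0"
    by (rule tendsto_mult_right_zero[OF lim_inverse_n])
qed simp

end
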